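(* Let $\alpha\neq\beta$ with $\alpha\neq0$, and let $(g_n)$ be as in the context. Then, as formal power series in $T$, $$\sum_{n\ge0}g_n(\alpha)\,T^n=\frac{1+T(\alpha-\beta)-\sqrt{1-2T(\alpha+\beta)+T^2(\alpha-\beta)^2}}{2T\alpha},$$ where the square root denotes the formal power series with constant term $1$.
   Context: Fix complex numbers $\alpha\neq\beta$. Define polynomials $g_n(x)\in\mathbb{C}[x]$ recursively by $g_0(x)=1$ and, for $n\ge1$, $$(x-\alpha)(\alpha-\beta)^{n-1}g_n(x)=\alpha(x-\beta)^n g_{n-1}(\alpha)-x(\alpha-\beta)^n g_{n-1}(x).$$ (The right-hand side vanishes at $x=\alpha$, so it is divisible by $x-\alpha$ and $g_n$ is a uniquely determined polynomial.) *)

theory Defs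
  imports Complex_Main "HOL-Computational_Algebra.Polynomial" "HOL-Computational_Algebra.Formal_Power_Series"
begin

text \<open>The recursion
  (x-a)(a-b)^(n-1) g_n(x) = a (x-b)^n g_(n-1)(a) - x (a-b)^n g_(n-1)(x)
  is rendered by exact polynomial division (the right-hand side is divisible).\<close>
fun g :: "complex \<Rightarrow> complex \<Rightarrow> nat \<Rightarrow> complex poly" where
  "g a b 0 = 1"
| "g a b (Suc n) =
     (smult (a * poly (g a b n) a) ([:-b, 1:] ^ Suc n)
        - smult ((a - b) ^ Suc n) ([:0, 1:] * g a b n))
     div ([:-a, 1:] * [:(a - b) ^ n:])"

definition fps_sqrt1 :: "complex fps \<Rightarrow> complex fps" where
  "fps_sqrt1 D = fps_radical (\<lambda>_ _. 1) 2 D"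

end

theory Submission
  imports Defs
begin

text \<open>Evaluate the recursion at the power series x = \<alpha> / A, where A = 1 + (\<alpha> - \<beta>) T.
  Then x - \<alpha> = -(\<alpha> - \<beta>) T x and x - \<beta> = (\<alpha> - \<beta>) V with V = (1 - \<beta> T) / A, so after
  dividing by \<alpha> (\<alpha> - \<beta>)^(n+1) the recursion reads g_n(x) / A - T g_(n+1)(x) / A = g_n(\<alpha>) V^(n+1).
  Multiplying by T^n and telescoping gives 1 / A = V C(T V) for the generating series C,
  i.e. C(s) = 1 / (1 - \<beta> T) for s = T V. Substituting this into
  Q(C) = \<alpha> T C^2 - (1 + (\<alpha> - \<beta>) T) C + 1 shows Q(C)(s) = 0, hence Q(C) = 0 because s
  has a nonzero linear term. So 1 + (\<alpha> - \<beta>) T - 2 \<alpha> T C squares to the discriminant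
  and has constant term 1: it is the square root in the statement.\<close>

unbundle fps_syntax

definition poly_fps :: "'a::comm_ring_1 poly \<Rightarrow> 'a fps \<Rightarrow> 'a fps" where
  "poly_fps p F = poly (map_poly fps_const p) F"

lemma fps_const_sum: "fps_const (\<Sum>i\<in>A. f i) = (\<Sum>i\<in>A. fps_const (f i))"
  by (induction A rule: infinite_finite_induct) (simp_all flip: fps_const_add)

lemma map_poly_fps_const_mult:
  fixes p q :: "'a::comm_ring_1 poly"
  shows "map_poly fps_const (p * q) = map_poly fps_const p * map_poly fps_const q"
  by (rule poly_eqI) (simp add: coeff_map_poly coeff_mult fps_const_sum)

lemma poly_fps_0 [simp]: "poly_fps 0 F = 0"
  by (simp add: poly_fps_def)

lemma poly_fps_1 [simp]: "poly_fps 1 F = 1"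
  by (simp add: poly_fps_def)

lemma poly_fps_pCons: "poly_fps (pCons c p) F = fps_const c + F * poly_fps p F"
  by (simp add: poly_fps_def map_poly_pCons)

lemma poly_fps_diff: "poly_fps (p - q) F = poly_fps p F - poly_fps q F"
proof -
  have "map_poly fps_const (p - q) = map_poly fps_const p - map_poly fps_const q"
    by (rule poly_eqI) (simp add: coeff_map_poly)
  then show ?thesis
    by (simp add: poly_fps_def)
qed

lemma poly_fps_mult: "poly_fps (p * q) F = poly_fps p F * poly_fps q F"
  by (simp add: poly_fps_def map_poly_fps_const_mult)

lemma poly_fps_power: "poly_fps (p ^ n) F = poly_fps p F ^ n"
  by (induction n) (simp_all add: poly_fps_mult)

lemma poly_fps_smult: "poly_fps (smult c p) F = fps_const c * poly_fps p F"
  using poly_fps_mult [of "[:c:]" p F] by (simp add: poly_fps_pCons)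

lemma g_Suc_mult:
  fixes a b :: complex
  assumes "a \<noteq> b"
  shows "g a b (Suc n) * ([:-a, 1:] * [:(a - b) ^ n:]) =
    smult (a * poly (g a b n) a) ([:-b, 1:] ^ Suc n) -
      smult ((a - b) ^ Suc n) ([:0, 1:] * g a b n)"
    (is "_ = ?P")
proof -
  have "poly ?P a = 0"
    by (simp add: algebra_simps)
  then have "[:-a, 1:] dvd ?P"
    by (rule poly_eq_0_iff_dvd [THEN iffD1])
  moreover have "is_unit [:(a - b) ^ n:]"
    using assms by (simp add: is_unit_triv)
  ultimately have "[:-a, 1:] * [:(a - b) ^ n:] dvd ?P"
    by (rule mult_unit_dvd_iff [THEN iffD2, rotated])
  then have "?P div ([:-a, 1:] * [:(a - b) ^ n:]) * ([:-a, 1:] * [:(a - b) ^ n:]) = ?P"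
    by (rule dvd_div_mult_self)
  then show ?thesis
    by (simp only: g.simps(2))
qed

lemma mult_inverse_1_plus_const_X:
  "(1 + fps_const c * fps_X) * inverse (1 + fps_const c * fps_X) = (1 :: 'a::field fps)"
  by (rule inverse_mult_eq_1') simp

lemma poly_fps_g_telescoping:
  fixes a b :: complex
  assumes ab: "a \<noteq> b" and a0: "a \<noteq> 0"
  defines "A \<equiv> 1 + fps_const (a - b) * fps_X"
    and "B \<equiv> 1 - fps_const b * fps_X"
  defines "x \<equiv> fps_const a * inverse A"
  shows "inverse A * poly_fps (g a b n) x - fps_X * (inverse A * poly_fps (g a b (Suc n)) x) =
    fps_const (poly (g a b n) a) * (B * inverse A) ^ Suc n"
proof -
  define d where "d = a - b"
  define c where "c = poly (g a b n) a"
  define V where "V = B * inverse A"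
  define E where "E k = poly_fps (g a b k) x" for k
  have A_inverse: "A * inverse A = 1"
    unfolding A_def by (rule mult_inverse_1_plus_const_X)
  have x_minus_a: "fps_const (- a) + x = - fps_const d * fps_X * x"
  proof -
    have "fps_const (- a) * A + fps_const a = - fps_const d * fps_X * fps_const a"
      unfolding A_def d_def fps_const_sub [symmetric] fps_const_neg [symmetric] by algebra
    then have "(fps_const (- a) * A + fps_const a) * inverse A = - fps_const d * fps_X * x"
      by (simp add: x_def mult.assoc)
    then show ?thesis
      by (simp add: x_def distrib_right mult.assoc A_inverse)
  qed
  have x_minus_b: "fps_const (- b) + x = fps_const d * V"
  proof -
    have "fps_const (- b) * A + fps_const a = fps_const d * B"
      unfolding A_def B_def d_def fps_const_sub [symmetric] fps_const_neg [symmetric] by algebra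
    then have "(fps_const (- b) * A + fps_const a) * inverse A = fps_const d * V"
      by (simp add: V_def mult.assoc)
    then show ?thesis
      by (simp add: x_def distrib_right mult.assoc A_inverse)
  qed
  have "poly_fps (g a b (Suc n) * ([:-a, 1:] * [:d ^ n:])) x =
    poly_fps (smult (a * c) ([:-b, 1:] ^ Suc n) - smult (d ^ Suc n) ([:0, 1:] * g a b n)) x"
    using g_Suc_mult [OF ab] by (simp only: c_def d_def)
  then have "E (Suc n) * ((fps_const (- a) + x) * fps_const (d ^ n)) =
    fps_const (a * c) * (fps_const (- b) + x) ^ Suc n - fps_const (d ^ Suc n) * (x * E n)"
    by (simp only: poly_fps_mult poly_fps_diff poly_fps_smult poly_fps_power poly_fps_pCons
        poly_fps_0 E_def fps_const_0_eq_0 fps_const_1_eq_1 mult_zero_right mult_1_right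
        add_0_right add_0_left)
  then have recursion_at_x: "E (Suc n) * (- fps_const d * fps_X * x * fps_const (d ^ n)) =
    fps_const (a * c) * (fps_const d * V) ^ Suc n - fps_const (d ^ Suc n) * (x * E n)"
    by (simp only: x_minus_a x_minus_b)
  have "fps_const (a * d ^ Suc n) *
      (inverse A * E n - fps_X * (inverse A * E (Suc n)) - fps_const c * V ^ Suc n) =
    E (Suc n) * (- fps_const d * fps_X * x * fps_const (d ^ n)) -
      (fps_const (a * c) * (fps_const d * V) ^ Suc n - fps_const (d ^ Suc n) * (x * E n))"
    (is "?K * ?Z = _")
    unfolding x_def fps_const_mult [symmetric] fps_const_power [symmetric] power_Suc
      power_mult_distrib by algebra
  also have "\<dots> = 0"
    by (simp only: recursion_at_x diff_self)
  finally have "?Z = 0"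
    using ab a0 by (simp add: d_def)
  then show ?thesis
    by (simp add: E_def V_def c_def)
qed

lemma fps_compose_of_telescoping:
  fixes e :: "nat \<Rightarrow> 'a::comm_ring_1 fps" and c :: "nat \<Rightarrow> 'a"
  assumes step: "\<And>n. e n - fps_X * e (Suc n) = fps_const (c n) * V ^ Suc n"
  shows "e 0 = V * (Abs_fps c oo fps_X * V)"
proof -
  define s where "s = fps_X * V"
  have partial_sum: "e 0 - fps_X ^ N * e N = V * (\<Sum>n<N. fps_const (c n) * s ^ n)" for N
  proof -
    have "fps_X ^ n * e n - fps_X ^ Suc n * e (Suc n) = V * (fps_const (c n) * s ^ n)" for n
      using arg_cong [OF step [of n], of "\<lambda>F. fps_X ^ n * F"]
      by (simp add: s_def algebra_simps power_mult_distrib)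
    then show ?thesis
      using sum_lessThan_telescope' [of "\<lambda>n. fps_X ^ n * e n" N] by (simp add: sum_distrib_left)
  qed
  have s0: "s $ 0 = 0"
    by (simp add: s_def)
  have partial_sum_nth: "(\<Sum>n<N. fps_const (c n) * s ^ n) $ j = (Abs_fps c oo s) $ j"
    if "j < N" for j N
  proof -
    have "(\<Sum>n<N. fps_const (c n) * s ^ n) $ j = (\<Sum>n<N. c n * (s ^ n $ j))"
      by (simp add: fps_sum_nth)
    also have "\<dots> = (\<Sum>n\<in>{0..j}. c n * (s ^ n $ j))"
      using that startsby_zero_power_prefix [OF s0] by (intro sum.mono_neutral_right) auto
    also have "\<dots> = (Abs_fps c oo s) $ j"
      by (simp add: fps_compose_nth)
    finally show ?thesis .
  qed
  show ?thesis
  proof (rule fps_ext)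
    fix m
    have "(fps_X ^ Suc m * e (Suc m)) $ m = 0"
      by (simp only: fps_X_power_mult_nth) simp
    then have "e 0 $ m = (e 0 - fps_X ^ Suc m * e (Suc m)) $ m"
      by (simp only: fps_sub_nth) simp
    also have "\<dots> = (V * (\<Sum>n<Suc m. fps_const (c n) * s ^ n)) $ m"
      by (simp only: partial_sum)
    also have "\<dots> = (V * (Abs_fps c oo s)) $ m"
      unfolding fps_mult_nth by (intro sum.cong refl, subst partial_sum_nth) auto
    finally show "e 0 $ m = (V * (Abs_fps c oo fps_X * V)) $ m"
      by (simp add: s_def)
  qed
qed

lemma g_generating_compose:
  fixes a b :: complex
  assumes ab: "a \<noteq> b" and a0: "a \<noteq> 0"
  defines "A \<equiv> 1 + fps_const (a - b) * fps_X"
    and "B \<equiv> 1 - fps_const b * fps_X"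
  shows "B * (Abs_fps (\<lambda>n. poly (g a b n) a) oo fps_X * (B * inverse A)) = 1"
proof -
  define x where "x = fps_const a * inverse A"
  define Cs where "Cs = Abs_fps (\<lambda>n. poly (g a b n) a) oo fps_X * (B * inverse A)"
  have "inverse A * poly_fps (g a b 0) x = B * inverse A * Cs"
    unfolding Cs_def by (rule fps_compose_of_telescoping)
      (use poly_fps_g_telescoping [OF ab a0] in \<open>simp add: A_def B_def x_def\<close>)
  then have "inverse A * 1 = inverse A * (B * Cs)"
    by (simp add: ac_simps)
  moreover have "inverse A \<noteq> 0"
    using mult_inverse_1_plus_const_X [of "a - b"] by (auto simp: A_def)
  ultimately show ?thesis
    by (simp add: Cs_def)
qed

lemma g_generating_quadratic:
  fixes a b :: complex
  assumes ab: "a \<noteq> b" and a0: "a \<noteq> 0"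
  defines "C \<equiv> Abs_fps (\<lambda>n. poly (g a b n) a)"
  shows "fps_X * fps_const a * C ^ 2 - (1 + fps_X * fps_const (a - b)) * C + 1 = 0"
    (is "?Q = 0")
proof -
  define A where "A = 1 + fps_const (a - b) * fps_X"
  define B where "B = 1 - fps_const b * fps_X"
  define s where "s = fps_X * (B * inverse A)"
  have A_inverse: "A * inverse A = 1"
    unfolding A_def by (rule mult_inverse_1_plus_const_X)
  have B_C: "B * (C oo s) = 1"
    using g_generating_compose [OF ab a0] by (simp add: A_def B_def C_def s_def)
  have s0: "s $ 0 = 0"
    by (simp add: s_def)
  have "s $ 1 = 1"
    by (simp add: s_def A_def B_def)
  then have "s \<noteq> 0"
    by auto
  have "A * B * (?Q oo s) =
      A * B * (s * fps_const a * (C oo s) ^ 2 - (1 + s * fps_const (a - b)) * (C oo s) + 1)"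
    by (simp add: fps_compose_add_distrib fps_compose_sub_distrib fps_compose_mult_distrib [OF s0]
        fps_compose_power [OF s0, symmetric] s0)
  also have "\<dots> = fps_X * fps_const a * (A * inverse A) * (B * (C oo s)) ^ 2
      - (A * (B * (C oo s)) + fps_X * B * fps_const (a - b) * (A * inverse A) * (B * (C oo s)))
      + A * B"
    unfolding s_def by algebra
  also have "\<dots> = 0"
    unfolding A_inverse B_C by (simp add: A_def B_def algebra_simps flip: fps_const_sub)
  finally have "A * B * (?Q oo s) = 0" .
  moreover have "A \<noteq> 0" and "B \<noteq> 0"
    using A_inverse B_C by auto
  ultimately show ?thesis
    using fps_compose_eq_0_iff [OF s0] \<open>s \<noteq> 0\<close> by simp
qed

lemma fps_sqrt1_unique:
  assumes "S ^ 2 = D" and "S $ 0 = 1"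
  shows "fps_sqrt1 D = S"
proof -
  have "D $ 0 = 1"
    using assms by (metis fps_nth_power_0 power_one)
  then show ?thesis
    using radical_unique [of "\<lambda>_ _. 1" 1 D S] assms by (simp add: fps_sqrt1_def numeral_2_eq_2)
qed

theorem mainTheorem2:
  fixes \<alpha> \<beta> :: complex
  assumes "\<alpha> \<noteq> \<beta>" and "\<alpha> \<noteq> 0"
  shows "Abs_fps (\<lambda>n. poly (g \<alpha> \<beta> n) \<alpha>) =
    (1 + fps_X * fps_const (\<alpha> - \<beta>)
       - fps_sqrt1 (1 - fps_const (2 * (\<alpha> + \<beta>)) * fps_X + fps_const ((\<alpha> - \<beta>) ^ 2) * fps_X ^ 2))
    / (fps_const (2 * \<alpha>) * fps_X)"
proof -
  define C where "C = Abs_fps (\<lambda>n. poly (g \<alpha> \<beta> n) \<alpha>)"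
  define D :: "complex fps"
    where "D = 1 - fps_const (2 * (\<alpha> + \<beta>)) * fps_X + fps_const ((\<alpha> - \<beta>) ^ 2) * fps_X ^ 2"
  define S where "S = 1 + fps_X * fps_const (\<alpha> - \<beta>) - fps_const (2 * \<alpha>) * fps_X * C"
  have fps_const_expand:
    "fps_const (2 * \<alpha>) = 2 * fps_const \<alpha>"
    "fps_const (2 * (\<alpha> + \<beta>)) = 2 * (fps_const \<alpha> + fps_const \<beta>)"
    "fps_const ((\<alpha> - \<beta>) ^ 2) = (fps_const \<alpha> - fps_const \<beta>) ^ 2"
    "fps_const (\<alpha> - \<beta>) = fps_const \<alpha> - fps_const \<beta>"
    by (simp_all add: numeral_fps_const)
  have "S ^ 2 - D = 4 * fps_const \<alpha> * fps_X *
      (fps_X * fps_const \<alpha> * C ^ 2 - (1 + fps_X * fps_const (\<alpha> - \<beta>)) * C + 1)"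
    unfolding S_def D_def fps_const_expand by algebra
  then have "fps_sqrt1 D = S"
    using g_generating_quadratic [OF assms]
    by (intro fps_sqrt1_unique) (simp_all add: C_def S_def)
  then have "1 + fps_X * fps_const (\<alpha> - \<beta>) - fps_sqrt1 D = fps_const (2 * \<alpha>) * fps_X * C"
    by (simp add: S_def)
  moreover have "fps_const (2 * \<alpha>) * fps_X \<noteq> (0 :: complex fps)"
    using assms by simp
  ultimately show ?thesis
    by (simp add: C_def D_def)
qed

end
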